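(* Let $(X,\mu)$ be a Lebesgue space with a continuous probability measure $\mu$, and let $\rho_1,\rho_2$ be admissible metrics on $X$ that coincide $(\mu\times\mu)$-almost everywhere on $X\times X$. Then there exists a subset $X'\subset X$ of full $\mu$-measure such that $\rho_1(x,y)=\rho_2(x,y)$ for all $x,y\in X'$.
   Context: A metric on a Lebesgue space is admissible if its restriction to some set of full measure is a separable metric space. *)

theory Defs
  imports "HOL-Probability.Probability"
begin

definition full_measure_set :: "'a measure \<Rightarrow> 'a set \<Rightarrow> bool" where
  "full_measure_set M A \<longleftrightarrow> A \<subseteq> space M \<and> A \<in> sets M \<and> emeasure M (space M - A) = 0"

definition iso_mod0 :: "'a measure \<Rightarrow> 'b measure \<Rightarrow> bool" where
  "iso_mod0 M N \<longleftrightarrow> (\<exists>A B f. full_measure_set M A \<and> full_measure_set N B \<and> bij_betw f A B \<and>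
     (\<forall>S. S \<subseteq> A \<longrightarrow> (S \<in> sets M \<longleftrightarrow> f ` S \<in> sets N)) \<and>
     (\<forall>S. S \<subseteq> A \<longrightarrow> S \<in> sets M \<longrightarrow> emeasure N (f ` S) = emeasure M S))"

definition lebesgue_space :: "'a measure \<Rightarrow> bool" where
  "lebesgue_space M \<longleftrightarrow> prob_space M \<and> complete_measure M \<and>
     (\<exists>\<nu> :: real measure. sets \<nu> = sets borel \<and> prob_space \<nu> \<and> iso_mod0 M (completion \<nu>))"

definition continuous_measure :: "'a measure \<Rightarrow> bool" where
  "continuous_measure M \<longleftrightarrow> (\<forall>x\<in>space M. emeasure M {x} = 0)"

definition metric_on :: "'a set \<Rightarrow> ('a \<Rightarrow> 'a \<Rightarrow> real) \<Rightarrow> bool" where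
  "metric_on A \<rho> \<longleftrightarrow> (\<forall>x\<in>A. \<forall>y\<in>A. 0 \<le> \<rho> x y \<and> (\<rho> x y = 0 \<longleftrightarrow> x = y) \<and> \<rho> x y = \<rho> y x) \<and>
     (\<forall>x\<in>A. \<forall>y\<in>A. \<forall>z\<in>A. \<rho> x z \<le> \<rho> x y + \<rho> y z)"

definition separable_on :: "'a set \<Rightarrow> ('a \<Rightarrow> 'a \<Rightarrow> real) \<Rightarrow> bool" where
  "separable_on A \<rho> \<longleftrightarrow> (\<exists>D. countable D \<and> D \<subseteq> A \<and> (\<forall>x\<in>A. \<forall>e>0. \<exists>d\<in>D. \<rho> x d < e))"

definition admissible_metric :: "'a measure \<Rightarrow> ('a \<Rightarrow> 'a \<Rightarrow> real) \<Rightarrow> bool" where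
  "admissible_metric M \<rho> \<longleftrightarrow> metric_on (space M) \<rho> \<and>
     (\<lambda>z. \<rho> (fst z) (snd z)) \<in> borel_measurable (M \<Otimes>\<^sub>M M) \<and>
     (\<exists>A. full_measure_set M A \<and> separable_on A \<rho>)"

end

theory Submission
  imports Defs
begin

text \<open>Delete from a separable full-measure set the countably many null balls with centres in a
  countable dense set and radii \<open>1 / (n + 1)\<close>. Around each remaining point every ball has positive
  measure, so for two remaining points \<open>x\<close>, \<open>y\<close> and every \<open>r > 0\<close> there is a point \<open>z\<close> with
  \<open>\<rho>\<^sub>1 x z < r\<close> at which both sections \<open>\<rho>\<^sub>i x \<cdot>\<close> and \<open>\<rho>\<^sub>i y \<cdot>\<close> agree (Fubini makes these sections
  agree a.e. for almost every \<open>x\<close>). The triangle inequality then gives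
  \<open>\<bar>\<rho>\<^sub>1 x y - \<rho>\<^sub>2 x y\<bar> \<le> 2 \<rho>\<^sub>1 x z < 2 r\<close>.\<close>

lemma metric_on_triangle:
  "metric_on S \<rho> \<Longrightarrow> x \<in> S \<Longrightarrow> y \<in> S \<Longrightarrow> z \<in> S \<Longrightarrow> \<rho> x z \<le> \<rho> x y + \<rho> y z"
  unfolding metric_on_def by blast

lemma metric_on_sym: "metric_on S \<rho> \<Longrightarrow> x \<in> S \<Longrightarrow> y \<in> S \<Longrightarrow> \<rho> x y = \<rho> y x"
  unfolding metric_on_def by blast

lemma metric_on_eq_if_common_points_nearby:
  assumes \<rho>1: "metric_on S \<rho>1" and \<rho>2: "metric_on S \<rho>2" and "x \<in> S" "y \<in> S"
    and near: "\<And>r. r > 0 \<Longrightarrow> \<exists>z\<in>S. \<rho>1 x z < r \<and> \<rho>1 x z = \<rho>2 x z \<and> \<rho>1 y z = \<rho>2 y z"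
  shows "\<rho>1 x y = \<rho>2 x y"
proof (rule ccontr)
  assume "\<rho>1 x y \<noteq> \<rho>2 x y"
  then obtain z where z: "z \<in> S" "\<rho>1 x z < \<bar>\<rho>1 x y - \<rho>2 x y\<bar> / 2"
    and agree: "\<rho>1 x z = \<rho>2 x z" "\<rho>1 y z = \<rho>2 y z"
    using near[of "\<bar>\<rho>1 x y - \<rho>2 x y\<bar> / 2"] by auto
  have "\<rho>1 x y \<le> \<rho>1 x z + \<rho>1 z y" "\<rho>1 z y \<le> \<rho>1 z x + \<rho>1 x y"
       "\<rho>2 x y \<le> \<rho>2 x z + \<rho>2 z y" "\<rho>2 z y \<le> \<rho>2 z x + \<rho>2 x y"
    using metric_on_triangle[OF \<rho>1] metric_on_triangle[OF \<rho>2] \<open>x \<in> S\<close> \<open>y \<in> S\<close> z(1) by blast+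
  moreover have "\<rho>1 z y = \<rho>1 y z" "\<rho>2 z y = \<rho>2 y z" "\<rho>1 z x = \<rho>1 x z" "\<rho>2 z x = \<rho>2 x z"
    using metric_on_sym[OF \<rho>1] metric_on_sym[OF \<rho>2] \<open>x \<in> S\<close> \<open>y \<in> S\<close> z(1) by blast+
  ultimately have "\<bar>\<rho>1 x y - \<rho>2 x y\<bar> \<le> 2 * \<rho>1 x z"
    using agree by (simp add: abs_le_iff)
  with z(2) show False
    by simp
qed

definition metric_ball :: "'a measure \<Rightarrow> ('a \<Rightarrow> 'a \<Rightarrow> real) \<Rightarrow> 'a \<Rightarrow> real \<Rightarrow> 'a set" where
  "metric_ball M \<rho> x r = {y \<in> space M. \<rho> x y < r}"

lemma sets_metric_ball:
  assumes "(\<lambda>y. \<rho> x y) \<in> borel_measurable M"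
  shows "metric_ball M \<rho> x r \<in> sets M"
  using assms unfolding metric_ball_def by measurable

lemma metric_ball_subset:
  assumes "metric_on (space M) \<rho>" "x \<in> space M" "d \<in> space M" "\<rho> x d < s" "s + s \<le> r"
  shows "metric_ball M \<rho> d s \<subseteq> metric_ball M \<rho> x r"
proof
  fix z assume "z \<in> metric_ball M \<rho> d s"
  then have "z \<in> space M" "\<rho> d z < s"
    by (auto simp: metric_ball_def)
  moreover have "\<rho> x z \<le> \<rho> x d + \<rho> d z"
    by (rule metric_on_triangle[OF assms(1-3) \<open>z \<in> space M\<close>])
  ultimately show "z \<in> metric_ball M \<rho> x r"
    using assms(4,5) by (auto simp: metric_ball_def)
qed

lemma separable_imp_null_set_outside_support:
  assumes \<rho>: "metric_on (space M) \<rho>" and sections: "\<And>x. x \<in> space M \<Longrightarrow> (\<lambda>y. \<rho> x y) \<in> borel_measurable M"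
    and "A \<subseteq> space M" and "separable_on A \<rho>"
  obtains N where "N \<in> null_sets M"
    and "\<And>x r. x \<in> A - N \<Longrightarrow> r > 0 \<Longrightarrow> metric_ball M \<rho> x r \<notin> null_sets M"
proof -
  obtain D where "countable D" "D \<subseteq> A" and dense: "\<And>x e. x \<in> A \<Longrightarrow> e > 0 \<Longrightarrow> \<exists>d\<in>D. \<rho> x d < e"
    using \<open>separable_on A \<rho>\<close> unfolding separable_on_def by blast
  define small where "small d n = metric_ball M \<rho> d (1 / Suc n)" for d n
  define I where "I = {(d, n). d \<in> D \<and> small d n \<in> null_sets M}"
  have "countable I"
    by (rule countable_subset[of _ "D \<times> UNIV"]) (auto simp: I_def \<open>countable D\<close>)
  then have null: "(\<Union>(d, n)\<in>I. small d n) \<in> null_sets M"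
    by (rule null_sets_UN') (auto simp: I_def)
  have positive: "metric_ball M \<rho> x r \<notin> null_sets M"
    if x: "x \<in> A - (\<Union>(d, n)\<in>I. small d n)" and "r > 0" for x r
  proof
    assume ball_null: "metric_ball M \<rho> x r \<in> null_sets M"
    obtain n :: nat where n: "1 / real (Suc n) < r / 2"
      using reals_Archimedean[of "r / 2"] \<open>r > 0\<close> by (auto simp: inverse_eq_divide)
    obtain d where "d \<in> D" and d: "\<rho> x d < 1 / real (Suc n)"
      using dense[of x "1 / real (Suc n)"] x by auto
    have sp: "x \<in> space M" "d \<in> space M"
      using x \<open>d \<in> D\<close> \<open>D \<subseteq> A\<close> \<open>A \<subseteq> space M\<close> by auto
    have "small d n \<subseteq> metric_ball M \<rho> x r"
      unfolding small_def using metric_ball_subset[OF \<rho> sp d] n by simp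
    then have "small d n \<in> null_sets M"
      using null_sets_subset[OF ball_null] sets_metric_ball[of \<rho> d, OF sections[OF sp(2)]]
      by (simp add: small_def)
    then have "x \<notin> small d n"
      using x \<open>d \<in> D\<close> by (auto simp: I_def)
    moreover have "\<rho> d x = \<rho> x d"
      using metric_on_sym[OF \<rho>] sp by blast
    ultimately show False
      using d sp by (simp add: small_def metric_ball_def)
  qed
  show thesis
    by (rule that[OF null positive])
qed

lemma AE_exists_in_non_null_set:
  assumes "AE z in M. P z" "B \<in> sets M" "B \<notin> null_sets M"
  shows "\<exists>z\<in>B. P z"
proof (rule ccontr)
  assume "\<not> (\<exists>z\<in>B. P z)"
  with assms(1) have "AE z in M. z \<notin> B"
    by (auto elim: AE_mp)
  with assms(2,3) show False
    using AE_iff_null_sets by blast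
qed

lemma full_measure_set_Diff_null:
  assumes "full_measure_set M A" "N \<in> null_sets M"
  shows "full_measure_set M (A - N)"
proof -
  have "space M - (A - N) \<subseteq> (space M - A) \<union> N" by auto
  moreover have "(space M - A) \<union> N \<in> null_sets M"
    using assms unfolding full_measure_set_def by auto
  moreover have "space M - (A - N) \<in> sets M"
    using assms unfolding full_measure_set_def by auto
  ultimately have "space M - (A - N) \<in> null_sets M"
    using null_sets_subset by blast
  then show ?thesis
    using assms unfolding full_measure_set_def by auto
qed

lemma admissible_metric_section_measurable:
  "admissible_metric M \<rho> \<Longrightarrow> x \<in> space M \<Longrightarrow> (\<lambda>y. \<rho> x y) \<in> borel_measurable M"
  unfolding admissible_metric_def using measurable_Pair2[of "\<lambda>z. \<rho> (fst z) (snd z)"] by auto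

lemma metric_eq_at_support_points:
  assumes metrics: "metric_on (space M) \<rho>1" "metric_on (space M) \<rho>2"
    and sp: "x \<in> space M" "y \<in> space M"
    and measurable_section: "(\<lambda>z. \<rho>1 x z) \<in> borel_measurable M"
    and support: "\<And>r. r > 0 \<Longrightarrow> metric_ball M \<rho>1 x r \<notin> null_sets M"
    and agree: "AE z in M. \<rho>1 x z = \<rho>2 x z" "AE z in M. \<rho>1 y z = \<rho>2 y z"
  shows "\<rho>1 x y = \<rho>2 x y"
proof (rule metric_on_eq_if_common_points_nearby[OF metrics sp])
  fix r :: real assume "r > 0"
  have "AE z in M. \<rho>1 x z = \<rho>2 x z \<and> \<rho>1 y z = \<rho>2 y z"
    using agree by simp
  then obtain z where "z \<in> metric_ball M \<rho>1 x r" "\<rho>1 x z = \<rho>2 x z \<and> \<rho>1 y z = \<rho>2 y z"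
    using AE_exists_in_non_null_set sets_metric_ball[of \<rho>1 x, OF measurable_section] support[OF \<open>r > 0\<close>]
    by blast
  then show "\<exists>z\<in>space M. \<rho>1 x z < r \<and> \<rho>1 x z = \<rho>2 x z \<and> \<rho>1 y z = \<rho>2 y z"
    unfolding metric_ball_def by blast
qed

theorem mainTheorem3:
  fixes M :: "'a measure" and \<rho>1 \<rho>2 :: "'a \<Rightarrow> 'a \<Rightarrow> real"
  assumes "lebesgue_space M" and "continuous_measure M"
    and "admissible_metric M \<rho>1" and "admissible_metric M \<rho>2"
    and "AE z in M \<Otimes>\<^sub>M M. \<rho>1 (fst z) (snd z) = \<rho>2 (fst z) (snd z)"
  shows "\<exists>X'. full_measure_set M X' \<and> (\<forall>x\<in>X'. \<forall>y\<in>X'. \<rho>1 x y = \<rho>2 x y)"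
proof -
  have "prob_space M"
    using assms(1) unfolding lebesgue_space_def by blast
  then interpret prob_space M .
  interpret pair_sigma_finite M M
    by (simp add: pair_sigma_finite_def sigma_finite_measure_axioms)
  have metrics: "metric_on (space M) \<rho>1" "metric_on (space M) \<rho>2"
    using assms(3,4) unfolding admissible_metric_def by auto
  obtain A where A: "full_measure_set M A" "separable_on A \<rho>1"
    using assms(3) unfolding admissible_metric_def by blast
  obtain N1 where "N1 \<in> null_sets M"
    and support: "\<And>x r. x \<in> A - N1 \<Longrightarrow> r > 0 \<Longrightarrow> metric_ball M \<rho>1 x r \<notin> null_sets M"
    using separable_imp_null_set_outside_support[OF metrics(1)
        admissible_metric_section_measurable[OF assms(3)]] A
    unfolding full_measure_set_def by blast
  obtain N2 where "N2 \<in> null_sets M"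
    and sections_agree: "\<And>x. x \<in> space M - N2 \<Longrightarrow> AE y in M. \<rho>1 x y = \<rho>2 x y"
    using AE_pair[OF assms(5)] by (rule AE_E3) simp
  have "full_measure_set M (A - (N1 \<union> N2))"
    using full_measure_set_Diff_null A(1) \<open>N1 \<in> null_sets M\<close> \<open>N2 \<in> null_sets M\<close> by blast
  moreover have "\<rho>1 x y = \<rho>2 x y" if "x \<in> A - (N1 \<union> N2)" "y \<in> A - (N1 \<union> N2)" for x y
  proof -
    have sp: "x \<in> space M" "y \<in> space M"
      using that A(1) unfolding full_measure_set_def by auto
    have "x \<in> A - N1" "x \<in> space M - N2" "y \<in> space M - N2"
      using that sp by auto
    then show ?thesis
      using metric_eq_at_support_points[OF metrics sp admissible_metric_section_measurable[OF assms(3) sp(1)]]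
        support sections_agree by blast
  qed
  ultimately show ?thesis
    by blast
qed

end
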